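(* Let $I\subseteq\mathbb{R}_-$ be a nonempty interval containing $0$ and let $f\colon I^n\to\mathbb{R}$. The following are equivalent: (i) $f$ is comonotonically modular; (ii) $f$ is invariant under horizontal max-differences; (iii) there exists $g\colon I^n\to\mathbb{R}$ such that for every $\sigma\in S_n$ and every $\mathbf{x}\in I^n_\sigma$, $$f(\mathbf{x})=g(\mathbf{0})+\sum_{i\in[n]}\Big(g\big(x_{\sigma(i)}\mathbf{1}_{A^\downarrow_\sigma(i)}\big)-g\big(x_{\sigma(i)}\mathbf{1}_{A^\downarrow_\sigma(i-1)}\big)\Big).$$ Moreover, in this case one can take $g=f$ in (iii).
   Context: Notation: $[n]=\{1,\ldots,n\}$; $S_n$ is the set of permutations of $[n]$; $\mathbf{1}_A$ is the indicator tuple of $A\subseteq[n]$, $\mathbf{0}=\mathbf{1}_\varnothing$. For $\sigma\in S_n$, $\mathbb{R}^n_\sigma=\{\mathbf{x}: x_{\sigma(1)}\leq\cdots\leq x_{\sigma(n)}\}$, $I^n_\sigma=I^n\cap\mathbb{R}^n_\sigma$, $A^\downarrow_\sigma(i)=\{\sigma(1),\ldots,\sigma(i)\}$, $A^\downarrow_\sigma(0)=\varnothing$. $\wedge,\vee$ denote componentwise min and max; $\mathbf{x}\vee c$ is the tuple with components $\max(x_i,c)$. Two tuples $\mathbf{x},\mathbf{x}'\in I^n$ are comonotonic if $\mathbf{x},\mathbf{x}'\in I^n_\sigma$ for some $\sigma\in S_n$. A function $f\colon I^n\to\mathbb{R}$ is comonotonically modular if $f(\mathbf{x})+f(\mathbf{x}')=f(\mathbf{x}\wedge\mathbf{x}')+f(\mathbf{x}\vee\mathbf{x}')$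 for all comonotonic $\mathbf{x},\mathbf{x}'\in I^n$. For $c\leq 0$, $[\mathbf{x}]^c$ is the tuple whose $i$th component is $0$ if $x_i\geq c$ and $x_i$ otherwise. For $I\subseteq\mathbb{R}_-$, $f$ is invariant under horizontal max-differences if $f(\mathbf{x})-f(\mathbf{x}\vee c)=f([\mathbf{x}]^c)-f([\mathbf{x}]^c\vee c)$ for all $\mathbf{x}\in I^n$, $c\in I$. *)

theory Defs
  imports "HOL-Analysis.Analysis"
begin

text \<open>n-tuples are functions on the index set {1..n}, extensional (undefined outside).\<close>

definition cube :: "real set \<Rightarrow> nat \<Rightarrow> (nat \<Rightarrow> real) set" where
  "cube I n = ({1..n} \<rightarrow>\<^sub>E I)"

definition in_sector :: "nat \<Rightarrow> (nat \<Rightarrow> nat) \<Rightarrow> (nat \<Rightarrow> real) \<Rightarrow> bool" where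
  "in_sector n \<sigma> x = (\<forall>i j. 1 \<le> i \<and> i \<le> j \<and> j \<le> n \<longrightarrow> x (\<sigma> i) \<le> x (\<sigma> j))"

definition comonotonic :: "real set \<Rightarrow> nat \<Rightarrow> (nat \<Rightarrow> real) \<Rightarrow> (nat \<Rightarrow> real) \<Rightarrow> bool" where
  "comonotonic I n x x' = (x \<in> cube I n \<and> x' \<in> cube I n \<and>
     (\<exists>\<sigma>. \<sigma> permutes {1..n} \<and> in_sector n \<sigma> x \<and> in_sector n \<sigma> x'))"

definition vmin :: "nat \<Rightarrow> (nat \<Rightarrow> real) \<Rightarrow> (nat \<Rightarrow> real) \<Rightarrow> (nat \<Rightarrow> real)" where
  "vmin n x y = restrict (\<lambda>i. min (x i) (y i)) {1..n}"

definition vmax :: "nat \<Rightarrow> (nat \<Rightarrow> real) \<Rightarrow> (nat \<Rightarrow> real) \<Rightarrow> (nat \<Rightarrow> real)" where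
  "vmax n x y = restrict (\<lambda>i. max (x i) (y i)) {1..n}"

definition vmaxc :: "nat \<Rightarrow> (nat \<Rightarrow> real) \<Rightarrow> real \<Rightarrow> (nat \<Rightarrow> real)" where
  "vmaxc n x c = restrict (\<lambda>i. max (x i) c) {1..n}"

definition cutc :: "nat \<Rightarrow> real \<Rightarrow> (nat \<Rightarrow> real) \<Rightarrow> (nat \<Rightarrow> real)" where
  "cutc n c x = restrict (\<lambda>i. if x i \<ge> c then 0 else x i) {1..n}"

definition ind :: "nat \<Rightarrow> nat set \<Rightarrow> (nat \<Rightarrow> real)" where
  "ind n A = restrict (\<lambda>i. if i \<in> A then 1 else 0) {1..n}"

definition smul :: "nat \<Rightarrow> real \<Rightarrow> (nat \<Rightarrow> real) \<Rightarrow> (nat \<Rightarrow> real)" where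
  "smul n c x = restrict (\<lambda>i. c * x i) {1..n}"

definition Adown :: "(nat \<Rightarrow> nat) \<Rightarrow> nat \<Rightarrow> nat set" where
  "Adown \<sigma> i = \<sigma> ` {1..i}"

definition comonotonically_modular :: "real set \<Rightarrow> nat \<Rightarrow> ((nat \<Rightarrow> real) \<Rightarrow> real) \<Rightarrow> bool" where
  "comonotonically_modular I n f = (\<forall>x x'. comonotonic I n x x' \<longrightarrow>
      f x + f x' = f (vmin n x x') + f (vmax n x x'))"

definition invariant_hmd :: "real set \<Rightarrow> nat \<Rightarrow> ((nat \<Rightarrow> real) \<Rightarrow> real) \<Rightarrow> bool" where
  "invariant_hmd I n f = (\<forall>x \<in> cube I n. \<forall>c \<in> I.
      f x - f (vmaxc n x c) = f (cutc n c x) - f (vmaxc n (cutc n c x) c))"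

definition rep_formula :: "real set \<Rightarrow> nat \<Rightarrow> ((nat \<Rightarrow> real) \<Rightarrow> real) \<Rightarrow> ((nat \<Rightarrow> real) \<Rightarrow> real) \<Rightarrow> bool" where
  "rep_formula I n f g = (\<forall>\<sigma>. \<sigma> permutes {1..n} \<longrightarrow> (\<forall>x \<in> cube I n. in_sector n \<sigma> x \<longrightarrow>
      f x = g (ind n {}) + (\<Sum>i = 1..n.
         g (smul n (x (\<sigma> i)) (ind n (Adown \<sigma> i))) - g (smul n (x (\<sigma> i)) (ind n (Adown \<sigma> (i - 1)))))))"

end

theory Submission
  imports Defs
begin

(* Characterisation of comonotonically modular functions on I^n, where I is a set of
   nonpositive reals containing 0.

   Fix a permutation \<sigma> and a tuple x in the sector R^n_\<sigma>, and write a_k = x(\<sigma> k).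
   The tuples u_k = x \<or> a_k interpolate between u_1 = x and u_n = a_n 1_{A(n)}.
   Both comonotonic modularity (i) and invariance under horizontal max-differences
   (ii) yield the same one-step identity
       f(u_k) - f(u_{k+1}) = f(a_k 1_{A(k)}) - f(a_{k+1} 1_{A(k)}),
   and telescoping this identity gives the representation (iii) with g = f.
   Conversely, under (iii) the value f(x) is a sum of increments each depending on a
   single coordinate x(\<sigma> i); since x \<and> x', x \<or> x', x \<or> c and [x]^c act
   coordinatewise and stay in the sector, (i) and (ii) reduce to one-variable
   identities. *)

text \<open>Every tuple lies in some sector: sort the indices by the values of the tuple.\<close>

lemma exists_sorting_permutation:
  fixes x :: "nat \<Rightarrow> real"
  shows "\<exists>\<sigma>. \<sigma> permutes {1..n} \<and> in_sector n \<sigma> x"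
proof -
  define L where "L = sort_key x [1..<Suc n]"
  have lenL: "length L = n" and setL: "set L = {1..n}" and dL: "distinct L"
    and sL: "sorted (map x L)" by (auto simp: L_def)
  define \<sigma> where "\<sigma> = (\<lambda>i. if i \<in> {1..n} then L ! (i - 1) else i)"
  have inj: "inj_on \<sigma> {1..n}"
  proof (rule inj_onI)
    fix i j assume i: "i \<in> {1..n}" and j: "j \<in> {1..n}" and "\<sigma> i = \<sigma> j"
    then have "L ! (i - 1) = L ! (j - 1)" by (simp add: \<sigma>_def)
    with lenL i j have "i - 1 = j - 1" using nth_eq_iff_index_eq[OF dL, of "i - 1" "j - 1"] by auto
    with i j show "i = j" by auto
  qed
  have sub: "\<sigma> ` {1..n} \<subseteq> {1..n}"
  proof
    fix y assume "y \<in> \<sigma> ` {1..n}"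
    then obtain i where i: "i \<in> {1..n}" and y: "y = L ! (i - 1)" by (auto simp: \<sigma>_def)
    have "L ! (i - 1) \<in> set L" using i lenL by (intro nth_mem) auto
    with y setL show "y \<in> {1..n}" by simp
  qed
  have "\<sigma> ` {1..n} = {1..n}" using endo_inj_surj[OF _ sub inj] by simp
  with inj have "bij_betw \<sigma> {1..n} {1..n}" by (simp add: bij_betw_def)
  then have perm: "\<sigma> permutes {1..n}" by (rule bij_imp_permutes) (auto simp: \<sigma>_def)
  have "in_sector n \<sigma> x"
    unfolding in_sector_def
  proof (intro allI impI)
    fix i j :: nat assume h: "1 \<le> i \<and> i \<le> j \<and> j \<le> n"
    have "map x L ! (i - 1) \<le> map x L ! (j - 1)"
      using h lenL by (intro sorted_nth_mono[OF sL]) auto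
    moreover have "map x L ! (i - 1) = x (L ! (i - 1))" using h lenL by (intro nth_map) auto
    moreover have "map x L ! (j - 1) = x (L ! (j - 1))" using h lenL by (intro nth_map) auto
    ultimately show "x (\<sigma> i) \<le> x (\<sigma> j)" using h by (simp add: \<sigma>_def)
  qed
  with perm show ?thesis by blast
qed

lemma cube_iff: "x \<in> cube I n \<longleftrightarrow> x \<in> extensional {1..n} \<and> (\<forall>i\<in>{1..n}. x i \<in> I)"
  by (auto simp: cube_def PiE_iff)

definition increment :: "nat \<Rightarrow> ((nat \<Rightarrow> real) \<Rightarrow> real) \<Rightarrow> (nat \<Rightarrow> nat) \<Rightarrow> nat \<Rightarrow> real \<Rightarrow> real" where
  "increment n g \<sigma> i t = g (smul n t (ind n (Adown \<sigma> i))) - g (smul n t (ind n (Adown \<sigma> (i - 1))))"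

context
  fixes n :: nat and \<sigma> :: "nat \<Rightarrow> nat"
  assumes perm: "\<sigma> permutes {1..n}"
begin

lemma perm_in: "j \<in> {1..n} \<Longrightarrow> \<sigma> j \<in> {1..n}"
  using permutes_in_image[OF perm] by blast

lemma tuple_eqI:
  assumes "F \<in> extensional {1..n}" "G \<in> extensional {1..n}"
    and "\<And>j. j \<in> {1..n} \<Longrightarrow> F (\<sigma> j) = G (\<sigma> j)"
  shows "F = G"
proof (rule extensionalityI[OF assms(1,2)])
  fix i assume "i \<in> {1..n}"
  then obtain j where "j \<in> {1..n}" "i = \<sigma> j" using permutes_image[OF perm] by blast
  then show "F i = G i" using assms(3) by simp
qed

lemma vmaxc_at: "j \<in> {1..n} \<Longrightarrow> vmaxc n F c (\<sigma> j) = max (F (\<sigma> j)) c"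
  using perm_in[of j] by (simp add: vmaxc_def)

lemma vmin_at: "j \<in> {1..n} \<Longrightarrow> vmin n F G (\<sigma> j) = min (F (\<sigma> j)) (G (\<sigma> j))"
  using perm_in[of j] by (simp add: vmin_def)

lemma vmax_at: "j \<in> {1..n} \<Longrightarrow> vmax n F G (\<sigma> j) = max (F (\<sigma> j)) (G (\<sigma> j))"
  using perm_in[of j] by (simp add: vmax_def)

lemma cutc_at: "j \<in> {1..n} \<Longrightarrow> cutc n c F (\<sigma> j) = (if F (\<sigma> j) \<ge> c then 0 else F (\<sigma> j))"
  using perm_in[of j] by (simp add: cutc_def)

lemma Adown_mem: "\<sigma> j \<in> Adown \<sigma> k \<longleftrightarrow> j \<in> {1..k}"
  unfolding Adown_def using permutes_inj[OF perm] by (simp add: inj_image_mem_iff)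

lemma smul_at: "j \<in> {1..n} \<Longrightarrow> smul n t (ind n (Adown \<sigma> k)) (\<sigma> j) = (if j \<le> k then t else 0)"
  using perm_in[of j] Adown_mem[of j k] by (auto simp: smul_def ind_def)

lemma in_sector_map:
  assumes x: "in_sector n \<sigma> x" and S: "\<And>j. j \<in> {1..n} \<Longrightarrow> x (\<sigma> j) \<in> S"
    and mono: "mono_on S \<phi>" and y: "\<And>j. j \<in> {1..n} \<Longrightarrow> y (\<sigma> j) = \<phi> (x (\<sigma> j))"
  shows "in_sector n \<sigma> y"
  unfolding in_sector_def
proof (intro allI impI)
  fix p q assume pq: "1 \<le> p \<and> p \<le> q \<and> q \<le> n"
  then have "\<phi> (x (\<sigma> p)) \<le> \<phi> (x (\<sigma> q))"
    using x S by (intro mono_onD[OF mono]) (auto simp: in_sector_def)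
  then show "y (\<sigma> p) \<le> y (\<sigma> q)" using pq y by simp
qed

lemma in_sector_vmaxc: "in_sector n \<sigma> x \<Longrightarrow> in_sector n \<sigma> (vmaxc n x c)"
  by (rule in_sector_map[where S = UNIV and \<phi> = "\<lambda>a. max a c"])
    (simp_all add: vmaxc_at mono_onI)

lemma in_sector_cutc:
  assumes "in_sector n \<sigma> x" and "\<And>j. j \<in> {1..n} \<Longrightarrow> x (\<sigma> j) \<le> 0"
  shows "in_sector n \<sigma> (cutc n c x)"
proof (rule in_sector_map[where S = "{..0}" and \<phi> = "\<lambda>a. if a \<ge> c then 0 else a"])
  show "mono_on {..0} (\<lambda>a::real. if a \<ge> c then 0 else a)"
    by (rule mono_onI) auto
qed (use assms in \<open>simp_all add: cutc_at\<close>)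

lemma in_sector_vmin:
  assumes "in_sector n \<sigma> x" "in_sector n \<sigma> x'"
  shows "in_sector n \<sigma> (vmin n x x')"
  unfolding in_sector_def
proof (intro allI impI)
  fix p q assume pq: "1 \<le> p \<and> p \<le> q \<and> q \<le> n"
  then have "min (x (\<sigma> p)) (x' (\<sigma> p)) \<le> min (x (\<sigma> q)) (x' (\<sigma> q))"
    using assms by (intro min.mono) (auto simp: in_sector_def)
  then show "vmin n x x' (\<sigma> p) \<le> vmin n x x' (\<sigma> q)" using pq by (simp add: vmin_at)
qed

lemma in_sector_vmax:
  assumes "in_sector n \<sigma> x" "in_sector n \<sigma> x'"
  shows "in_sector n \<sigma> (vmax n x x')"
  unfolding in_sector_def
proof (intro allI impI)
  fix p q assume pq: "1 \<le> p \<and> p \<le> q \<and> q \<le> n"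
  then have "max (x (\<sigma> p)) (x' (\<sigma> p)) \<le> max (x (\<sigma> q)) (x' (\<sigma> q))"
    using assms by (intro max.mono) (auto simp: in_sector_def)
  then show "vmax n x x' (\<sigma> p) \<le> vmax n x x' (\<sigma> q)" using pq by (simp add: vmax_at)
qed

end

lemma extensional_ops:
  "vmaxc n F c \<in> extensional {1..n}" "vmin n F G \<in> extensional {1..n}"
  "vmax n F G \<in> extensional {1..n}" "cutc n c F \<in> extensional {1..n}"
  "smul n c H \<in> extensional {1..n}"
  by (simp_all add: vmaxc_def vmin_def vmax_def cutc_def smul_def)

lemma cube_vmaxc: "x \<in> cube I n \<Longrightarrow> c \<in> I \<Longrightarrow> vmaxc n x c \<in> cube I n"
  by (auto simp: cube_iff vmaxc_def max_def)

lemma cube_cutc: "x \<in> cube I n \<Longrightarrow> 0 \<in> I \<Longrightarrow> cutc n c x \<in> cube I n"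
  by (auto simp: cube_iff cutc_def)

lemma cube_vmin: "x \<in> cube I n \<Longrightarrow> x' \<in> cube I n \<Longrightarrow> vmin n x x' \<in> cube I n"
  by (auto simp: cube_iff vmin_def min_def)

lemma cube_vmax: "x \<in> cube I n \<Longrightarrow> x' \<in> cube I n \<Longrightarrow> vmax n x x' \<in> cube I n"
  by (auto simp: cube_iff vmax_def max_def)

lemma cube_smul_ind: "t \<in> I \<Longrightarrow> 0 \<in> I \<Longrightarrow> smul n t (ind n A) \<in> cube I n"
  by (auto simp: cube_iff smul_def ind_def)

text \<open>Telescoping: along a sector, f is determined by f at the zero tuple and its values on the
  tuples t 1_{A(i)}, provided f satisfies the one-step identity between consecutive
  levels u_k = x \<or> x(\<sigma> k).\<close>

lemma telescoping_representation:
  fixes f :: "(nat \<Rightarrow> real) \<Rightarrow> real"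
  assumes perm: "\<sigma> permutes {1..n}"
    and xe: "x \<in> extensional {1..n}" and xs: "in_sector n \<sigma> x"
    and one_step: "\<And>k. 1 \<le> k \<Longrightarrow> k < n \<Longrightarrow>
      f (vmaxc n x (x (\<sigma> k))) - f (vmaxc n x (x (\<sigma> (Suc k))))
      = f (smul n (x (\<sigma> k)) (ind n (Adown \<sigma> k))) - f (smul n (x (\<sigma> (Suc k))) (ind n (Adown \<sigma> k)))"
  shows "f x = f (ind n {}) + (\<Sum>i = 1..n. increment n f \<sigma> i (x (\<sigma> i)))"
proof (cases "n = 0")
  case True
  then have "x = (\<lambda>_. undefined)" using xe by simp
  then show ?thesis using True by (simp add: ind_def restrict_def)
next
  case False
  define u where "u k = vmaxc n x (x (\<sigma> k))" for k
  define y where "y k = smul n (x (\<sigma> k)) (ind n (Adown \<sigma> k))" for k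
  define w where "w k = smul n (x (\<sigma> k)) (ind n (Adown \<sigma> (k - 1)))" for k
  have mono: "x (\<sigma> p) \<le> x (\<sigma> q)" if "1 \<le> p" "p \<le> q" "q \<le> n" for p q
    using xs that by (simp add: in_sector_def)
  have top: "u n = y n" unfolding u_def y_def
    by (rule tuple_eqI[OF perm extensional_ops(1,5)]) (simp add: vmaxc_at[OF perm] smul_at[OF perm] mono)
  have bottom: "u 1 = x" unfolding u_def
    by (rule tuple_eqI[OF perm extensional_ops(1) xe]) (simp add: vmaxc_at[OF perm] mono)
  have w1: "w 1 = ind n {}"
    by (auto simp: w_def Adown_def smul_def ind_def restrict_def fun_eq_iff)
  have partial: "f (u k) = f (w k) + (\<Sum>i = k..n. f (y i) - f (w i))" if "1 \<le> k" "k \<le> n" for k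
    using that(2,1)
  proof (induction k rule: inc_induct)
    case base
    then show ?case using top by simp
  next
    case (step m)
    have "f (u m) - f (u (Suc m)) = f (y m) - f (w (Suc m))"
      using one_step[of m] step by (simp add: u_def y_def w_def)
    moreover have "(\<Sum>i = m..n. f (y i) - f (w i)) = (f (y m) - f (w m)) + (\<Sum>i = Suc m..n. f (y i) - f (w i))"
      using step by (intro sum.atLeast_Suc_atMost) simp
    ultimately show ?case using step by simp
  qed
  show ?thesis
    using partial[of 1] False bottom w1 by (simp add: y_def w_def increment_def)
qed

context
  fixes I :: "real set" and n :: nat and \<sigma> :: "nat \<Rightarrow> nat" and x :: "nat \<Rightarrow> real"
  assumes I0: "I \<subseteq> {..0}" and perm: "\<sigma> permutes {1..n}"
    and xc: "x \<in> cube I n" and xs: "in_sector n \<sigma> x"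
begin

lemma sector_le: "1 \<le> p \<Longrightarrow> p \<le> q \<Longrightarrow> q \<le> n \<Longrightarrow> x (\<sigma> p) \<le> x (\<sigma> q)"
  using xs by (simp add: in_sector_def)

lemma coord_in: "j \<in> {1..n} \<Longrightarrow> x (\<sigma> j) \<in> I"
  using xc perm_in[OF perm] by (simp add: cube_iff)

lemma coord_nonpos: "j \<in> {1..n} \<Longrightarrow> x (\<sigma> j) \<le> 0"
  using coord_in I0 by auto

text \<open>(i) gives the step: a_k 1_{A(k)} and x \<or> a_{k+1} are comonotonic, with meet
  x \<or> a_k and join a_{k+1} 1_{A(k)}.\<close>

lemma step_from_modular:
  fixes f :: "(nat \<Rightarrow> real) \<Rightarrow> real"
  assumes zI: "0 \<in> I" and cm: "comonotonically_modular I n f" and k: "1 \<le> k" "k < n"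
  shows "f (vmaxc n x (x (\<sigma> k))) - f (vmaxc n x (x (\<sigma> (Suc k))))
      = f (smul n (x (\<sigma> k)) (ind n (Adown \<sigma> k))) - f (smul n (x (\<sigma> (Suc k))) (ind n (Adown \<sigma> k)))"
proof -
  define y where "y = smul n (x (\<sigma> k)) (ind n (Adown \<sigma> k))"
  define U where "U = vmaxc n x (x (\<sigma> (Suc k)))"
  have "y \<in> cube I n" unfolding y_def
    using coord_in[of k] k zI by (intro cube_smul_ind) auto
  moreover have "U \<in> cube I n" unfolding U_def
    using coord_in[of "Suc k"] k by (intro cube_vmaxc[OF xc]) auto
  moreover have "in_sector n \<sigma> y" unfolding in_sector_def y_def
    using coord_nonpos[of k] k by (auto simp: smul_at[OF perm])
  moreover have "in_sector n \<sigma> U" unfolding U_def by (rule in_sector_vmaxc[OF perm xs])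
  ultimately have "f y + f U = f (vmin n y U) + f (vmax n y U)"
    using cm perm unfolding comonotonically_modular_def comonotonic_def by blast
  moreover have "vmin n y U = vmaxc n x (x (\<sigma> k))"
  proof (rule tuple_eqI[OF perm extensional_ops(2,1)])
    fix j assume j: "j \<in> {1..n}"
    show "vmin n y U (\<sigma> j) = vmaxc n x (x (\<sigma> k)) (\<sigma> j)"
      using j k sector_le[of j k] sector_le[of k "Suc k"] sector_le[of "Suc k" j]
        sector_le[of k j] coord_nonpos[of j]
      by (cases "j \<le> k") (simp_all add: vmin_at[OF perm] vmaxc_at[OF perm] y_def U_def smul_at[OF perm])
  qed
  moreover have "vmax n y U = smul n (x (\<sigma> (Suc k))) (ind n (Adown \<sigma> k))"
  proof (rule tuple_eqI[OF perm extensional_ops(3,5)])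
    fix j assume j: "j \<in> {1..n}"
    show "vmax n y U (\<sigma> j) = smul n (x (\<sigma> (Suc k))) (ind n (Adown \<sigma> k)) (\<sigma> j)"
      using j k sector_le[of j k] sector_le[of k "Suc k"] sector_le[of "Suc k" j] coord_nonpos[of j]
      by (cases "j \<le> k") (simp_all add: vmax_at[OF perm] vmaxc_at[OF perm] y_def U_def smul_at[OF perm])
  qed
  ultimately show ?thesis by (simp add: y_def U_def)
qed

text \<open>(ii) gives the step: apply it to U = x \<or> a_k and c = a_{k+1}.  If a_k < a_{k+1},
  then U \<or> c = x \<or> a_{k+1}, [U]^c = a_k 1_{A(k)} and [U]^c \<or> c = a_{k+1} 1_{A(k)}.\<close>

lemma step_from_hmd:
  fixes f :: "(nat \<Rightarrow> real) \<Rightarrow> real"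
  assumes hm: "invariant_hmd I n f" and k: "1 \<le> k" "k < n"
  shows "f (vmaxc n x (x (\<sigma> k))) - f (vmaxc n x (x (\<sigma> (Suc k))))
      = f (smul n (x (\<sigma> k)) (ind n (Adown \<sigma> k))) - f (smul n (x (\<sigma> (Suc k))) (ind n (Adown \<sigma> k)))"
proof (cases "x (\<sigma> k) = x (\<sigma> (Suc k))")
  case True
  then show ?thesis by simp
next
  case False
  with sector_le[of k "Suc k"] k have lt: "x (\<sigma> k) < x (\<sigma> (Suc k))" by simp
  define c where "c = x (\<sigma> (Suc k))"
  define U where "U = vmaxc n x (x (\<sigma> k))"
  have "U \<in> cube I n" unfolding U_def
    using coord_in[of k] k by (intro cube_vmaxc[OF xc]) auto
  moreover have "c \<in> I" using coord_in[of "Suc k"] k by (simp add: c_def)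
  ultimately have "f U - f (vmaxc n U c) = f (cutc n c U) - f (vmaxc n (cutc n c U) c)"
    using hm unfolding invariant_hmd_def by blast
  moreover have "vmaxc n U c = vmaxc n x (x (\<sigma> (Suc k)))"
    by (rule tuple_eqI[OF perm extensional_ops(1,1)])
      (use lt in \<open>simp add: vmaxc_at[OF perm] U_def c_def\<close>)
  moreover have cut: "cutc n c U = smul n (x (\<sigma> k)) (ind n (Adown \<sigma> k))"
  proof (rule tuple_eqI[OF perm extensional_ops(4,5)])
    fix j assume j: "j \<in> {1..n}"
    show "cutc n c U (\<sigma> j) = smul n (x (\<sigma> k)) (ind n (Adown \<sigma> k)) (\<sigma> j)"
      using j k sector_le[of j k] sector_le[of "Suc k" j] sector_le[of k j] lt
      by (cases "j \<le> k") (simp_all add: cutc_at[OF perm] vmaxc_at[OF perm] smul_at[OF perm] U_def c_def)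
  qed
  moreover have "vmaxc n (cutc n c U) c = smul n (x (\<sigma> (Suc k))) (ind n (Adown \<sigma> k))"
    unfolding cut
    by (rule tuple_eqI[OF perm extensional_ops(1,5)])
      (use lt coord_nonpos[of "Suc k"] k in \<open>simp add: vmaxc_at[OF perm] smul_at[OF perm] c_def\<close>)
  ultimately show ?thesis by (simp add: U_def c_def)
qed

end

lemma rep_formula_at:
  fixes f g :: "(nat \<Rightarrow> real) \<Rightarrow> real"
  assumes R: "rep_formula I n f g" and perm: "\<sigma> permutes {1..n}"
    and z: "z \<in> cube I n" "in_sector n \<sigma> z" and h: "\<And>j. j \<in> {1..n} \<Longrightarrow> z (\<sigma> j) = h j"
  shows "f z = g (ind n {}) + (\<Sum>i = 1..n. increment n g \<sigma> i (h i))"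
proof -
  have "f z = g (ind n {}) + (\<Sum>i = 1..n. increment n g \<sigma> i (z (\<sigma> i)))"
    using R perm z unfolding rep_formula_def increment_def by blast
  also have "\<dots> = g (ind n {}) + (\<Sum>i = 1..n. increment n g \<sigma> i (h i))"
    using h by simp
  finally show ?thesis .
qed

text \<open>(iii) \<Longrightarrow> (i): x \<and> x' and x \<or> x' stay in the common sector, and each increment
  satisfies G(a) + G(b) = G(min a b) + G(max a b) since {min a b, max a b} = {a, b}.\<close>

lemma modular_from_rep:
  fixes f g :: "(nat \<Rightarrow> real) \<Rightarrow> real"
  assumes R: "rep_formula I n f g" and co: "comonotonic I n x x'"
  shows "f x + f x' = f (vmin n x x') + f (vmax n x x')"
proof -
  obtain \<sigma> where perm: "\<sigma> permutes {1..n}" and xc: "x \<in> cube I n" "x' \<in> cube I n"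
    and xs: "in_sector n \<sigma> x" "in_sector n \<sigma> x'"
    using co unfolding comonotonic_def by blast
  let ?G = "increment n g \<sigma>" and ?a = "\<lambda>i. x (\<sigma> i)" and ?b = "\<lambda>i. x' (\<sigma> i)"
  have pointwise: "?G i a + ?G i b = ?G i (min a b) + ?G i (max a b)" for i a b
    by (cases "a \<le> b") (simp_all add: min_def max_def)
  have "f x + f x' = 2 * g (ind n {}) + (\<Sum>i = 1..n. ?G i (?a i) + ?G i (?b i))"
    using rep_formula_at[OF R perm xc(1) xs(1)] rep_formula_at[OF R perm xc(2) xs(2)]
    by (simp add: sum.distrib)
  also have "\<dots> = 2 * g (ind n {}) + (\<Sum>i = 1..n. ?G i (min (?a i) (?b i)) + ?G i (max (?a i) (?b i)))"
    by (intro arg_cong[where f = "(+) (2 * g (ind n {}))"] sum.cong refl pointwise)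
  also have "\<dots> = f (vmin n x x') + f (vmax n x x')"
    using rep_formula_at[OF R perm cube_vmin[OF xc] in_sector_vmin[OF perm xs], of "\<lambda>i. min (?a i) (?b i)"]
      rep_formula_at[OF R perm cube_vmax[OF xc] in_sector_vmax[OF perm xs], of "\<lambda>i. max (?a i) (?b i)"]
    by (simp add: sum.distrib vmin_at[OF perm] vmax_at[OF perm])
  finally show ?thesis .
qed

text \<open>(iii) \<Longrightarrow> (ii): the four tuples x, x \<or> c, [x]^c, [x]^c \<or> c lie in the sector of x, and
  for each coordinate a \<le> 0 the one-variable identity
  G(a) - G(max a c) = G([a]^c) - G(max [a]^c c) holds (both sides vanish if a \<ge> c).\<close>

lemma hmd_from_rep:
  fixes f g :: "(nat \<Rightarrow> real) \<Rightarrow> real"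
  assumes I0: "I \<subseteq> {..0}" and zI: "0 \<in> I" and R: "rep_formula I n f g"
    and xc: "x \<in> cube I n" and cI: "c \<in> I"
  shows "f x - f (vmaxc n x c) = f (cutc n c x) - f (vmaxc n (cutc n c x) c)"
proof -
  obtain \<sigma> where perm: "\<sigma> permutes {1..n}" and xs: "in_sector n \<sigma> x"
    using exists_sorting_permutation by blast
  let ?G = "increment n g \<sigma>" and ?a = "\<lambda>i. x (\<sigma> i)"
  let ?cut = "\<lambda>a::real. if a \<ge> c then 0 else a"
  have c0: "c \<le> 0" using cI I0 by auto
  have pointwise: "?G i a - ?G i (max a c) = ?G i (?cut a) - ?G i (max (?cut a) c)" for i a
    using c0 by (cases "a \<ge> c") (simp_all add: max_def)
  have nonpos: "\<And>j. j \<in> {1..n} \<Longrightarrow> x (\<sigma> j) \<le> 0"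
    using coord_nonpos[OF I0 perm xc xs] .
  have cut_c: "cutc n c x \<in> cube I n" and cut_s: "in_sector n \<sigma> (cutc n c x)"
    using cube_cutc[OF xc zI] in_sector_cutc[OF perm xs nonpos] .
  have "f x - f (vmaxc n x c) = (\<Sum>i = 1..n. ?G i (?a i) - ?G i (max (?a i) c))"
    using rep_formula_at[OF R perm xc xs, of ?a]
      rep_formula_at[OF R perm cube_vmaxc[OF xc cI] in_sector_vmaxc[OF perm xs], of "\<lambda>i. max (?a i) c"]
    by (simp add: sum_subtractf vmaxc_at[OF perm])
  also have "\<dots> = (\<Sum>i = 1..n. ?G i (?cut (?a i)) - ?G i (max (?cut (?a i)) c))"
    by (intro sum.cong refl pointwise)
  also have "\<dots> = f (cutc n c x) - f (vmaxc n (cutc n c x) c)"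
    using rep_formula_at[OF R perm cut_c cut_s, of "\<lambda>i. ?cut (?a i)"]
      rep_formula_at[OF R perm cube_vmaxc[OF cut_c cI] in_sector_vmaxc[OF perm cut_s],
        of "\<lambda>i. max (?cut (?a i)) c"]
    by (simp add: sum_subtractf vmaxc_at[OF perm] cutc_at[OF perm] del: cutc_at)
  finally show ?thesis .
qed

lemma rep_from_step:
  fixes f :: "(nat \<Rightarrow> real) \<Rightarrow> real"
  assumes step: "\<And>\<sigma> x k. \<sigma> permutes {1..n} \<Longrightarrow> x \<in> cube I n \<Longrightarrow> in_sector n \<sigma> x \<Longrightarrow>
      1 \<le> k \<Longrightarrow> k < n \<Longrightarrow>
      f (vmaxc n x (x (\<sigma> k))) - f (vmaxc n x (x (\<sigma> (Suc k))))
      = f (smul n (x (\<sigma> k)) (ind n (Adown \<sigma> k))) - f (smul n (x (\<sigma> (Suc k))) (ind n (Adown \<sigma> k)))"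
  shows "rep_formula I n f f"
  unfolding rep_formula_def
proof (intro allI impI ballI)
  fix \<sigma> x assume perm: "\<sigma> permutes {1..n}" and xc: "x \<in> cube I n" and xs: "in_sector n \<sigma> x"
  have "x \<in> extensional {1..n}" using xc by (simp add: cube_iff)
  from telescoping_representation[OF perm this xs step[OF perm xc xs]]
  show "f x = f (ind n {}) + (\<Sum>i = 1..n.
         f (smul n (x (\<sigma> i)) (ind n (Adown \<sigma> i))) - f (smul n (x (\<sigma> i)) (ind n (Adown \<sigma> (i - 1)))))"
    by (simp add: increment_def)
qed

theorem theorem10:
  fixes I :: "real set" and n :: nat and f :: "(nat \<Rightarrow> real) \<Rightarrow> real"
  assumes "is_interval I" and "I \<subseteq> {..0}" and "0 \<in> I"
  shows "(comonotonically_modular I n f \<longleftrightarrow> invariant_hmd I n f)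
       \<and> (invariant_hmd I n f \<longleftrightarrow> (\<exists>g. rep_formula I n f g))
       \<and> (comonotonically_modular I n f \<longrightarrow> rep_formula I n f f)"
proof -
  have i_iii: "rep_formula I n f f" if "comonotonically_modular I n f"
    using step_from_modular[OF assms(2) _ _ _ assms(3) that] by (rule rep_from_step)
  have ii_iii: "rep_formula I n f f" if "invariant_hmd I n f"
    using step_from_hmd[OF assms(2) _ _ _ that] by (rule rep_from_step)
  have iii_i: "comonotonically_modular I n f" if "rep_formula I n f g" for g
    unfolding comonotonically_modular_def using modular_from_rep[OF that] by blast
  have iii_ii: "invariant_hmd I n f" if "rep_formula I n f g" for g
    unfolding invariant_hmd_def using hmd_from_rep[OF assms(2,3) that] by blast
  show ?thesis using i_iii ii_iii iii_i iii_ii by blast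
qed

end
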